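(* Let $K\subset\mathbb E$ be a regular cone and $F$ a normal barrier for $K$ with negative curvature. Then for every $x\in\operatorname{int}K$ and every $h\in K$, $$\nabla^2F(x)h\in K^*\qquad\text{and}\qquad \nabla F(x+h)-\nabla F(x)\in K^*.$$
   Context: $\mathbb E$ finite-dimensional real space, dual $\mathbb E^*$, pairing $\langle\cdot,\cdot\rangle$. $K$ regular: closed, convex, pointed, nonempty interior; $K^*=\{s\in\mathbb E^*:\langle s,x\rangle\ge0\ \forall x\in K\}$. A normal barrier for $K$ is a self-concordant barrier $F$ on $\operatorname{int}K$ with $F(\tau x)=F(x)-\nu\ln\tau$ for all $\tau>0$. $F$ has negative curvature if $D^3F(x)[h,u,u]\le0$ for all $x\in\operatorname{int}K$, $h\in K$, $u\in\mathbb E$. *)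

theory Defs
  imports "HOL-Analysis.Analysis"
begin

text \<open>The space E is a finite-dimensional real inner product space ('a::euclidean_space);
  its dual is identified with 'a itself via the inner product, so the pairing is \<open>s \<bullet> x\<close>.\<close>

definition regular_cone :: "'a::euclidean_space set \<Rightarrow> bool" where
  "regular_cone K \<longleftrightarrow> cone K \<and> closed K \<and> convex K \<and>
     K \<inter> uminus ` K = {0} \<and> interior K \<noteq> {}"

definition dual_cone :: "'a::euclidean_space set \<Rightarrow> 'a set" where
  "dual_cone K = {s. \<forall>x\<in>K. 0 \<le> s \<bullet> x}"

text \<open>Derivatives of F on the open set Q:
  g x is the gradient, H x h = Hessian at x applied to h (so D2F(x)[h,u] = H x h \<bullet> u),
  T x h u v = D3F(x)[h,u,v] (derivative of y \<mapsto> D2F(y)[u,v] at x in direction h).\<close>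

definition derivs3 :: "'a::euclidean_space set \<Rightarrow> ('a \<Rightarrow> real) \<Rightarrow> ('a \<Rightarrow> 'a)
     \<Rightarrow> ('a \<Rightarrow> 'a \<Rightarrow> 'a) \<Rightarrow> ('a \<Rightarrow> 'a \<Rightarrow> 'a \<Rightarrow> 'a \<Rightarrow> real) \<Rightarrow> bool" where
  "derivs3 Q F g H T \<longleftrightarrow>
     (\<forall>x\<in>Q. (F has_derivative (\<lambda>h. g x \<bullet> h)) (at x)
          \<and> (g has_derivative H x) (at x)
          \<and> (\<forall>u v. ((\<lambda>y. H y u \<bullet> v) has_derivative (\<lambda>h. T x h u v)) (at x)))
     \<and> (\<forall>h u v. continuous_on Q (\<lambda>x. T x h u v))"

definition sc_barrier :: "'a::euclidean_space set \<Rightarrow> ('a \<Rightarrow> real) \<Rightarrow> ('a \<Rightarrow> 'a)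
     \<Rightarrow> ('a \<Rightarrow> 'a \<Rightarrow> 'a) \<Rightarrow> ('a \<Rightarrow> 'a \<Rightarrow> 'a \<Rightarrow> 'a \<Rightarrow> real) \<Rightarrow> real \<Rightarrow> bool" where
  "sc_barrier K F g H T \<nu> \<longleftrightarrow>
     derivs3 (interior K) F g H T
     \<and> convex_on (interior K) F
     \<and> (\<forall>x\<in>frontier (interior K). filterlim F at_top (at x within interior K))
     \<and> (\<forall>x\<in>interior K. \<forall>h. \<bar>T x h h h\<bar> \<le> 2 * (H x h \<bullet> h) powr (3/2))
     \<and> (\<forall>x\<in>interior K. \<forall>h. (g x \<bullet> h)\<^sup>2 \<le> \<nu> * (H x h \<bullet> h))"

definition normal_barrier :: "'a::euclidean_space set \<Rightarrow> ('a \<Rightarrow> real) \<Rightarrow> ('a \<Rightarrow> 'a)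
     \<Rightarrow> ('a \<Rightarrow> 'a \<Rightarrow> 'a) \<Rightarrow> ('a \<Rightarrow> 'a \<Rightarrow> 'a \<Rightarrow> 'a \<Rightarrow> real) \<Rightarrow> real \<Rightarrow> bool" where
  "normal_barrier K F g H T \<nu> \<longleftrightarrow>
     sc_barrier K F g H T \<nu>
     \<and> (\<forall>x\<in>interior K. \<forall>\<tau>>0. F (\<tau> *\<^sub>R x) = F x - \<nu> * ln \<tau>)"

definition negative_curvature :: "'a::euclidean_space set
     \<Rightarrow> ('a \<Rightarrow> 'a \<Rightarrow> 'a \<Rightarrow> 'a \<Rightarrow> real) \<Rightarrow> bool" where
  "negative_curvature K T \<longleftrightarrow> (\<forall>x\<in>interior K. \<forall>h\<in>K. \<forall>u. T x h u u \<le> 0)"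

end

theory Submission
  imports Defs
begin

text \<open>Fix y in the interior of K. By negative curvature the quadratic form D2F(z)[y,y] decreases
  when z moves in a direction of K, so b \<mapsto> \<langle>\<nabla>F(x+h+by) - \<nabla>F(x+by), y\<rangle> is nonincreasing
  on [0,\<infinity>). Logarithmic homogeneity makes \<nabla>F homogeneous of degree -1, hence both gradients
  tend to 0 as b \<rightarrow> \<infinity>, and the value at b = 0 is nonnegative. Differentiating along h gives
  the claim for the Hessian, and density of int K in K extends both inequalities to all of K.\<close>

lemma interior_cone_scaleR:
  fixes K :: "'a::euclidean_space set"
  assumes "cone K" and "z \<in> interior K" and "c > 0"
  shows "c *\<^sub>R z \<in> interior K"
proof -
  have "(*\<^sub>R) c ` K = K"
  proof
    show "(*\<^sub>R) c ` K \<subseteq> K"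
      using assms(1,3) by (auto simp: cone_def)
    show "K \<subseteq> (*\<^sub>R) c ` K"
    proof
      fix w
      assume "w \<in> K"
      then have "inverse c *\<^sub>R w \<in> K"
        using assms(1,3) by (simp add: cone_def)
      moreover have "w = c *\<^sub>R (inverse c *\<^sub>R w)"
        using assms(3) by simp
      ultimately show "w \<in> (*\<^sub>R) c ` K"
        by blast
    qed
  qed
  moreover have "interior ((*\<^sub>R) c ` K) = (*\<^sub>R) c ` interior K"
    using assms(3) by (intro interior_injective_linear_image) (auto simp: inj_on_def)
  ultimately show ?thesis
    using assms(2) by auto
qed

lemma interior_convex_cone_add:
  fixes K :: "'a::euclidean_space set"
  assumes "cone K" and "convex K" and "z \<in> interior K" and "d \<in> K"
  shows "z + d \<in> interior K"
proof -
  have "d - (1/2) *\<^sub>R (d - z) \<in> interior K"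
    using mem_interior_convex_shrink[OF assms(2,3,4)] by simp
  then have "2 *\<^sub>R (d - (1/2) *\<^sub>R (d - z)) \<in> interior K"
    using interior_cone_scaleR[OF assms(1)] by simp
  moreover have "2 *\<^sub>R (d - (1/2) *\<^sub>R (d - z)) = z + d"
    by (simp add: algebra_simps scaleR_2)
  ultimately show ?thesis
    by simp
qed

lemma dual_coneI_interior:
  fixes K :: "'a::euclidean_space set"
  assumes "convex K" and "interior K \<noteq> {}" and "\<And>y. y \<in> interior K \<Longrightarrow> 0 \<le> s \<bullet> y"
  shows "s \<in> dual_cone K"
proof -
  have "interior K \<subseteq> {y. 0 \<le> s \<bullet> y}"
    using assms(3) by blast
  then have "closure (interior K) \<subseteq> {y. 0 \<le> s \<bullet> y}"
    using closed_halfspace_ge[of 0 s] by (rule closure_minimal)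
  then show ?thesis
    using convex_closure_interior[OF assms(1,2)] closure_subset
    by (auto simp: dual_cone_def)
qed

lemma has_real_derivative_along_line:
  fixes f :: "'a::real_normed_vector \<Rightarrow> real"
  assumes "(f has_derivative f') (at (z + t *\<^sub>R d))"
  shows "((\<lambda>s. f (z + s *\<^sub>R d)) has_real_derivative f' d) (at t)"
proof -
  have "((\<lambda>s. z + s *\<^sub>R d) has_derivative (\<lambda>s. s *\<^sub>R d)) (at t)"
    by (auto intro!: derivative_eq_intros)
  from has_derivative_compose[OF this assms]
  have "((\<lambda>s. f (z + s *\<^sub>R d)) has_derivative (\<lambda>s. s * f' d)) (at t)"
    using linear_scale[OF has_derivative_linear[OF assms]] by simp
  then show ?thesis
    by (simp add: has_field_derivative_def mult.commute[of _ "f' d"])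
qed

lemma gradient_scaleR_of_log_homogeneous:
  fixes F :: "'a::real_inner \<Rightarrow> real"
  assumes "open Q" and "z \<in> Q" and "\<tau> > 0" and "\<tau> *\<^sub>R z \<in> Q"
    and "\<And>w. w \<in> Q \<Longrightarrow> (F has_derivative (\<lambda>h. g w \<bullet> h)) (at w)"
    and "\<And>w. w \<in> Q \<Longrightarrow> F (\<tau> *\<^sub>R w) = F w - c"
  shows "g (\<tau> *\<^sub>R z) = (1 / \<tau>) *\<^sub>R g z"
proof -
  have "((\<lambda>w. \<tau> *\<^sub>R w) has_derivative (\<lambda>h. \<tau> *\<^sub>R h)) (at z)"
    by (auto intro!: derivative_eq_intros)
  from has_derivative_compose[OF this assms(5)[OF assms(4)]]
  have "((\<lambda>w. F (\<tau> *\<^sub>R w)) has_derivative (\<lambda>h. (\<tau> *\<^sub>R g (\<tau> *\<^sub>R z)) \<bullet> h)) (at z)"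
    by simp
  moreover have "((\<lambda>w. F w - c) has_derivative (\<lambda>h. g z \<bullet> h)) (at z)"
    using assms(5)[OF assms(2)] by (auto intro!: derivative_eq_intros)
  then have "((\<lambda>w. F (\<tau> *\<^sub>R w)) has_derivative (\<lambda>h. g z \<bullet> h)) (at z)"
    by (rule has_derivative_transform_within_open[OF _ assms(1,2)]) (simp add: assms(6))
  ultimately have "(\<lambda>h. (\<tau> *\<^sub>R g (\<tau> *\<^sub>R z)) \<bullet> h) = (\<lambda>h. g z \<bullet> h)"
    by (rule has_derivative_unique)
  then have "g z = \<tau> *\<^sub>R g (\<tau> *\<^sub>R z)"
    by (metis inner_commute vector_eq_ldot)
  then show ?thesis
    using assms(3) by simp
qed

lemma hessian_antitone_along_cone:
  fixes K :: "'a::euclidean_space set"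
  assumes "cone K" and "convex K" and "z \<in> interior K" and "k \<in> K"
    and "\<And>w. w \<in> interior K \<Longrightarrow> ((\<lambda>y. H y u \<bullet> u) has_derivative (\<lambda>h. T w h u u)) (at w)"
    and "\<And>w. w \<in> interior K \<Longrightarrow> T w k u u \<le> 0"
  shows "H (z + k) u \<bullet> u \<le> H z u \<bullet> u"
proof -
  define \<psi> where "\<psi> a = H (z + a *\<^sub>R k) u \<bullet> u" for a
  have "\<psi> 1 \<le> \<psi> 0"
  proof (rule DERIV_nonpos_imp_nonincreasing[of 0 1])
    fix a :: real
    assume "0 \<le> a"
    then have w: "z + a *\<^sub>R k \<in> interior K"
      using assms(1,4) interior_convex_cone_add[OF assms(1-3)] by (simp add: cone_def)
    show "\<exists>D. (\<psi> has_real_derivative D) (at a) \<and> D \<le> 0"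
      unfolding \<psi>_def
      using has_real_derivative_along_line[OF assms(5)[OF w]] assms(6)[OF w] by blast
  qed simp
  then show ?thesis
    by (simp add: \<psi>_def)
qed

lemma gradient_tendsto_0_along_ray:
  fixes K :: "'a::euclidean_space set" and g :: "'a \<Rightarrow> 'a"
  assumes "cone K" and "convex K" and "y \<in> interior K" and "u \<in> K"
    and "isCont g y"
    and "\<And>w \<tau>. w \<in> interior K \<Longrightarrow> \<tau> > 0 \<Longrightarrow> g (\<tau> *\<^sub>R w) = (1 / \<tau>) *\<^sub>R g w"
  shows "((\<lambda>b. g (u + b *\<^sub>R y)) \<longlongrightarrow> 0) at_top"
proof -
  have ray: "inverse b *\<^sub>R g (y + inverse b *\<^sub>R u) = g (u + b *\<^sub>R y)" if "b > 0" for b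
  proof -
    have "inverse b *\<^sub>R u \<in> K"
      using that assms(1,4) by (simp add: cone_def)
    then have "g (b *\<^sub>R (y + inverse b *\<^sub>R u)) = (1 / b) *\<^sub>R g (y + inverse b *\<^sub>R u)"
      using that by (intro assms(6) interior_convex_cone_add[OF assms(1-3)])
    moreover have "b *\<^sub>R (y + inverse b *\<^sub>R u) = u + b *\<^sub>R y"
      using that by (simp add: algebra_simps)
    ultimately show ?thesis
      by (simp add: inverse_eq_divide)
  qed
  have inv: "((\<lambda>b::real. inverse b) \<longlongrightarrow> 0) at_top"
    by (rule tendsto_inverse_0_at_top[OF filterlim_ident])
  have "((\<lambda>b. y + inverse b *\<^sub>R u) \<longlongrightarrow> y) at_top"
    using tendsto_add[OF tendsto_const tendsto_scaleR[OF inv tendsto_const]] by simp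
  then have "((\<lambda>b. inverse b *\<^sub>R g (y + inverse b *\<^sub>R u)) \<longlongrightarrow> 0 *\<^sub>R g y) at_top"
    by (intro tendsto_scaleR inv isCont_tendsto_compose[OF assms(5)])
  then have "((\<lambda>b. inverse b *\<^sub>R g (y + inverse b *\<^sub>R u)) \<longlongrightarrow> 0) at_top"
    by simp
  moreover have "\<forall>\<^sub>F b in at_top. inverse b *\<^sub>R g (y + inverse b *\<^sub>R u) = g (u + b *\<^sub>R y)"
    using eventually_gt_at_top[of 0] by (rule eventually_mono) (rule ray)
  ultimately show ?thesis
    by (rule Lim_transform_eventually)
qed

lemma gradient_increment_nonneg_on_interior:
  fixes K :: "'a::euclidean_space set"
  assumes "cone K" and "convex K" and "x \<in> interior K" and "k \<in> K" and "y \<in> interior K"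
    and "\<And>w. w \<in> interior K \<Longrightarrow> (g has_derivative H w) (at w)"
    and "\<And>w. w \<in> interior K \<Longrightarrow> H (w + k) y \<bullet> y \<le> H w y \<bullet> y"
    and "\<And>u. u \<in> K \<Longrightarrow> ((\<lambda>b. g (u + b *\<^sub>R y)) \<longlongrightarrow> 0) at_top"
  shows "0 \<le> (g (x + k) - g x) \<bullet> y"
proof -
  define \<phi> where "\<phi> b = (g (x + k + b *\<^sub>R y) - g (x + b *\<^sub>R y)) \<bullet> y" for b
  have line: "x + b *\<^sub>R y \<in> interior K" if "b \<ge> 0" for b
  proof -
    have "b *\<^sub>R y \<in> K"
      by (meson assms(1,5) cone_def interior_subset subsetD that)
    then show ?thesis
      by (rule interior_convex_cone_add[OF assms(1-3)])
  qed
  have grad_y: "((\<lambda>v. g v \<bullet> y) has_derivative (\<lambda>j. H w j \<bullet> y)) (at w)" if "w \<in> interior K" for w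
    using assms(6)[OF that] by (auto intro!: derivative_eq_intros)
  have antitone: "\<phi> b \<le> \<phi> 0" if "b \<ge> 0" for b
  proof (rule DERIV_nonpos_imp_nonincreasing[OF that])
    fix c :: real
    assume "0 \<le> c"
    then have w: "x + c *\<^sub>R y \<in> interior K"
      by (rule line)
    have shift: "x + k + c *\<^sub>R y = (x + c *\<^sub>R y) + k"
      by (simp add: algebra_simps)
    have "x + k + c *\<^sub>R y \<in> interior K"
      unfolding shift by (rule interior_convex_cone_add[OF assms(1,2) w assms(4)])
    then have "(\<phi> has_real_derivative H (x + k + c *\<^sub>R y) y \<bullet> y - H (x + c *\<^sub>R y) y \<bullet> y) (at c)"
      unfolding \<phi>_def inner_diff_left
      using has_real_derivative_along_line[OF grad_y, of "x + k" c y]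
        has_real_derivative_along_line[OF grad_y[OF w]]
      by (intro DERIV_diff) auto
    then show "\<exists>D. (\<phi> has_real_derivative D) (at c) \<and> D \<le> 0"
      using assms(7)[OF w] shift by auto
  qed
  have "x + k \<in> K"
    using interior_convex_cone_add[OF assms(1-4)] interior_subset by blast
  then have "(\<phi> \<longlongrightarrow> (0 - 0) \<bullet> y) at_top"
    unfolding \<phi>_def using assms(3,8) interior_subset
    by (intro tendsto_inner tendsto_diff tendsto_const) auto
  moreover have "\<forall>\<^sub>F b in at_top. \<phi> b \<le> \<phi> 0"
    using antitone by (rule eventually_at_top_linorderI)
  ultimately have "0 \<le> \<phi> 0"
    by (intro tendsto_upperbound) auto
  then show ?thesis
    by (simp add: \<phi>_def)
qed

lemma derivative_nonneg_of_increments_nonneg: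
  fixes g :: "'a::real_inner \<Rightarrow> 'a"
  assumes "(g has_derivative H) (at x)" and "\<And>t. t > 0 \<Longrightarrow> 0 \<le> (g (x + t *\<^sub>R h) - g x) \<bullet> y"
  shows "0 \<le> H h \<bullet> y"
proof -
  define f where "f t = g (x + t *\<^sub>R h) \<bullet> y" for t
  have "((\<lambda>v. g v \<bullet> y) has_derivative (\<lambda>j. H j \<bullet> y)) (at (x + 0 *\<^sub>R h))"
    using assms(1) by (auto intro!: derivative_eq_intros)
  then have "(f has_real_derivative H h \<bullet> y) (at 0)"
    unfolding f_def by (rule has_real_derivative_along_line)
  then have "((\<lambda>t. (f t - f 0) / (t - 0)) \<longlongrightarrow> H h \<bullet> y) (at_right 0)"
    using has_field_derivative_iff filterlim_at_split by blast
  moreover have "\<forall>\<^sub>F t in at_right 0. 0 \<le> (f t - f 0) / (t - 0)"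
  proof (rule eventually_at_rightI[of 0 1])
    fix t :: real
    assume "t \<in> {0<..<1}"
    then show "0 \<le> (f t - f 0) / (t - 0)"
      using assms(2)[of t] by (simp add: f_def inner_diff_left)
  qed simp
  ultimately show ?thesis
    by (rule tendsto_lowerbound) simp
qed

theorem mainTheorem16:
  fixes K :: "'a::euclidean_space set" and F :: "'a \<Rightarrow> real"
    and g :: "'a \<Rightarrow> 'a" and H :: "'a \<Rightarrow> 'a \<Rightarrow> 'a"
    and T :: "'a \<Rightarrow> 'a \<Rightarrow> 'a \<Rightarrow> 'a \<Rightarrow> real" and \<nu> :: real
  assumes "regular_cone K"
    and "normal_barrier K F g H T \<nu>"
    and "negative_curvature K T"
    and "x \<in> interior K" and "h \<in> K"
  shows "H x h \<in> dual_cone K \<and> g (x + h) - g x \<in> dual_cone K"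
proof -
  have cK: "cone K" and vK: "convex K" and "interior K \<noteq> {}"
    using assms(1) by (auto simp: regular_cone_def)
  have Fder: "\<And>w. w \<in> interior K \<Longrightarrow> (F has_derivative (\<lambda>h. g w \<bullet> h)) (at w)"
    and gder: "\<And>w. w \<in> interior K \<Longrightarrow> (g has_derivative H w) (at w)"
    and Tder: "\<And>w u. w \<in> interior K \<Longrightarrow> ((\<lambda>y. H y u \<bullet> u) has_derivative (\<lambda>h. T w h u u)) (at w)"
    and hom: "\<And>w \<tau>. w \<in> interior K \<Longrightarrow> \<tau> > 0 \<Longrightarrow> F (\<tau> *\<^sub>R w) = F w - \<nu> * ln \<tau>"
    using assms(2) by (auto simp: normal_barrier_def sc_barrier_def derivs3_def)
  have grad_hom: "g (\<tau> *\<^sub>R w) = (1 / \<tau>) *\<^sub>R g w" if "w \<in> interior K" and "\<tau> > 0" for w \<tau>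
    using that interior_cone_scaleR[OF cK that] Fder hom
    by (intro gradient_scaleR_of_log_homogeneous[of "interior K"]) auto
  have incr: "0 \<le> (g (x + k) - g x) \<bullet> y" if "k \<in> K" and "y \<in> interior K" for k y
  proof (rule gradient_increment_nonneg_on_interior[OF cK vK assms(4) that gder])
    show "H (w + k) y \<bullet> y \<le> H w y \<bullet> y" if "w \<in> interior K" for w
      using assms(3) \<open>k \<in> K\<close> unfolding negative_curvature_def
      by (intro hessian_antitone_along_cone[OF cK vK that \<open>k \<in> K\<close> Tder]) auto
    show "((\<lambda>b. g (u + b *\<^sub>R y)) \<longlongrightarrow> 0) at_top" if "u \<in> K" for u
      using has_derivative_continuous[OF gder[OF \<open>y \<in> interior K\<close>]] grad_hom
      by (intro gradient_tendsto_0_along_ray[OF cK vK \<open>y \<in> interior K\<close> that]) auto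
  qed
  have "0 \<le> H x h \<bullet> y" if "y \<in> interior K" for y
    using cK assms(5) that unfolding cone_def
    by (intro derivative_nonneg_of_increments_nonneg[OF gder[OF assms(4)]] incr) auto
  then show ?thesis
    using dual_coneI_interior[OF vK \<open>interior K \<noteq> {}\<close>] incr[OF assms(5)] by blast
qed

end
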